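(* Let $G$ be a complete edge-colored permutation graph. Then the quotient graph $G[M]/\mathbb{P}_{\max}(M)$ of each strong prime module $M$ of $G$ is a complete edge-colored permutation graph. In particular, for every strong prime module $M$ with $|M|\ge 3$, the quotient graph $G[M]/\mathbb{P}_{\max}(M)$ is $2$-edge-colored.
   Context: A complete $k$-edge-colored graph $G=(V,E_1,\dots,E_k)$ is the complete graph on a finite set $V$ with edges partitioned into $k$ nonempty color classes $E_i$ (the one-vertex graph also counts); $G_{|i}=(V,E_i)$. A labeling is a bijection $\ell:V\to\{1,\dots,|V|\}$. A graph $(V,E)$ with labeling $\ell$ is a simple permutation graph of a permutation $\pi$ if for all $u,v$ with $\ell(u)>\ell(v)$: $\{u,v\}\in E$ iff $\pi^{-1}(\ell(u))<\pi^{-1}(\ell(v))$. $G$ is a complete edge-colored permutation graph if there exist a labeling $\ell$ and permutations $\pi_1,\dots,\pi_k$ with $(G_{|i},\ell)$ a simple permutation graph of $\pi_i$ for all $i$. A module is a set $M\subseteq V$ such that for every $v\notin M$ all edges $\{u,v\}$, $u\in M$, have the same color; a strong module is a nonempty module comparable by inclusion or disjoint with every other module. For a strong module $M$ with $|M|\ge2$, $\mathbb{P}_{\max}(M)$ is the set of inclusion-maximal strong modules properly contained in $M$, and $G[M]/\mathbb{P}_{\max}(M)$ is the complete graph on $\mathbb{P}_{\max}(M)$ with $\{M_a,M_b\}$ colored by the common color of all edges between $M_a$ and $M_b$; for $|M|=1$ it is the one-vertex graph. A strong module is series if its quotient graph has at least two vertices and all its edges have one color, and prime otherwise. *)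

theory Defs
  imports Main
begin

definition complete_ec_graph :: "'a set \<Rightarrow> ('a \<Rightarrow> 'a \<Rightarrow> 'c) \<Rightarrow> bool" where
  "complete_ec_graph V c \<longleftrightarrow> finite V \<and> V \<noteq> {} \<and>
     (\<forall>u\<in>V. \<forall>v\<in>V. u \<noteq> v \<longrightarrow> c u v = c v u)"

definition colors :: "'a set \<Rightarrow> ('a \<Rightarrow> 'a \<Rightarrow> 'c) \<Rightarrow> 'c set" where
  "colors V c = {c u v | u v. u \<in> V \<and> v \<in> V \<and> u \<noteq> v}"

definition color_class :: "'a set \<Rightarrow> ('a \<Rightarrow> 'a \<Rightarrow> 'c) \<Rightarrow> 'c \<Rightarrow> 'a set set" where
  "color_class V c i = {{u, v} | u v. u \<in> V \<and> v \<in> V \<and> u \<noteq> v \<and> c u v = i}"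

definition simple_perm_graph ::
    "'a set \<Rightarrow> 'a set set \<Rightarrow> ('a \<Rightarrow> nat) \<Rightarrow> (nat \<Rightarrow> nat) \<Rightarrow> bool" where
  "simple_perm_graph V E lab \<pi> \<longleftrightarrow>
     (\<forall>u\<in>V. \<forall>v\<in>V. lab u > lab v \<longrightarrow>
        ({u, v} \<in> E \<longleftrightarrow>
          inv_into {1..card V} \<pi> (lab u) < inv_into {1..card V} \<pi> (lab v)))"

definition ec_perm_graph :: "'a set \<Rightarrow> ('a \<Rightarrow> 'a \<Rightarrow> 'c) \<Rightarrow> bool" where
  "ec_perm_graph V c \<longleftrightarrow> complete_ec_graph V c \<and>
     (\<exists>lab. bij_betw lab V {1..card V} \<and>
        (\<forall>i\<in>colors V c. \<exists>\<pi>. bij_betw \<pi> {1..card V} {1..card V} \<and>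
            simple_perm_graph V (color_class V c i) lab \<pi>))"

definition is_module :: "'a set \<Rightarrow> ('a \<Rightarrow> 'a \<Rightarrow> 'c) \<Rightarrow> 'a set \<Rightarrow> bool" where
  "is_module V c M \<longleftrightarrow> M \<subseteq> V \<and>
     (\<forall>v\<in>V - M. \<forall>u\<in>M. \<forall>u'\<in>M. c u v = c u' v)"

definition strong_module :: "'a set \<Rightarrow> ('a \<Rightarrow> 'a \<Rightarrow> 'c) \<Rightarrow> 'a set \<Rightarrow> bool" where
  "strong_module V c M \<longleftrightarrow> is_module V c M \<and> M \<noteq> {} \<and>
     (\<forall>M'. is_module V c M' \<longrightarrow> M \<subseteq> M' \<or> M' \<subseteq> M \<or> M \<inter> M' = {})"

definition Pmax :: "'a set \<Rightarrow> ('a \<Rightarrow> 'a \<Rightarrow> 'c) \<Rightarrow> 'a set \<Rightarrow> 'a set set" where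
  "Pmax V c M = {M'. strong_module V c M' \<and> M' \<subset> M \<and>
       (\<forall>M''. strong_module V c M'' \<and> M'' \<subset> M \<and> M' \<subseteq> M'' \<longrightarrow> M'' = M')}"

text \<open>Colouring of the quotient graph: the colour of an edge between representatives
  (well defined since the members of Pmax are disjoint modules).\<close>
definition quot_col :: "('a \<Rightarrow> 'a \<Rightarrow> 'c) \<Rightarrow> 'a set \<Rightarrow> 'a set \<Rightarrow> 'c" where
  "quot_col c Ma Mb = c (SOME u. u \<in> Ma) (SOME v. v \<in> Mb)"

definition quot_vertices :: "'a set \<Rightarrow> ('a \<Rightarrow> 'a \<Rightarrow> 'c) \<Rightarrow> 'a set \<Rightarrow> 'a set set" where
  "quot_vertices V c M = (if card M \<ge> 2 then Pmax V c M else {M})"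

definition series_module :: "'a set \<Rightarrow> ('a \<Rightarrow> 'a \<Rightarrow> 'c) \<Rightarrow> 'a set \<Rightarrow> bool" where
  "series_module V c M \<longleftrightarrow> strong_module V c M \<and>
     card (quot_vertices V c M) \<ge> 2 \<and>
     card (colors (quot_vertices V c M) (quot_col c)) = 1"

definition prime_module :: "'a set \<Rightarrow> ('a \<Rightarrow> 'a \<Rightarrow> 'c) \<Rightarrow> 'a set \<Rightarrow> bool" where
  "prime_module V c M \<longleftrightarrow> strong_module V c M \<and> \<not> series_module V c M"

end

(*
  The quotient of a strong module M is isomorphic to the subgraph of G induced by one
  vertex from each maximal strong submodule of M, and induced subgraphs of complete
  edge-coloured permutation graphs are again such graphs: restrict the labeling and
  the permutations and replace their values by ranks.

  No triangle of a permutation graph has three colours: if lab x < lab y < lab z and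
  xz has colour i, the permutation of colour class i reverses x and z, hence it also
  reverses y with x or with z. By Gallai's argument, a complete colouring without
  rainbow triangles that uses at least three colours has a colour j whose graph is
  disconnected. In the quotient of a prime module M, the j-component C of a j-edge
  is then a proper module of the quotient, and the union of the children in C is a
  strong module of G strictly between a maximal strong submodule and M, which is
  impossible. Finally the quotient uses at least two colours since M is not series.
*)
theory Submission
  imports Defs
begin

section \<open>Colourings without rainbow triangles\<close>

definition rainbow_free :: "'a set \<Rightarrow> ('a \<Rightarrow> 'a \<Rightarrow> 'c) \<Rightarrow> bool" where
  "rainbow_free W c \<longleftrightarrow> (\<forall>x\<in>W. \<forall>y\<in>W. \<forall>z\<in>W. x \<noteq> y \<and> y \<noteq> z \<and> x \<noteq> z \<longrightarrow>
     c x y = c x z \<or> c x y = c y z \<or> c x z = c y z)"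

definition color_closed :: "'a set \<Rightarrow> ('a \<Rightarrow> 'a \<Rightarrow> 'c) \<Rightarrow> 'c \<Rightarrow> 'a set \<Rightarrow> bool" where
  "color_closed W c j S \<longleftrightarrow> (\<forall>x\<in>S. \<forall>y\<in>W - S. c x y \<noteq> j)"

definition color_component :: "'a set \<Rightarrow> ('a \<Rightarrow> 'a \<Rightarrow> 'c) \<Rightarrow> 'c \<Rightarrow> 'a set \<Rightarrow> bool" where
  "color_component W c j X \<longleftrightarrow> X \<noteq> {} \<and> X \<subseteq> W \<and> color_closed W c j X \<and>
     (\<forall>Y. Y \<subseteq> X \<longrightarrow> Y \<noteq> {} \<longrightarrow> Y \<noteq> X \<longrightarrow> (\<exists>y\<in>Y. \<exists>z\<in>X - Y. c y z = j))"

lemma rainbow_freeD: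
  "rainbow_free W c \<Longrightarrow> x \<in> W \<Longrightarrow> y \<in> W \<Longrightarrow> z \<in> W \<Longrightarrow> x \<noteq> y \<Longrightarrow> y \<noteq> z \<Longrightarrow> x \<noteq> z \<Longrightarrow>
   c x y = c x z \<or> c x y = c y z \<or> c x z = c y z"
  unfolding rainbow_free_def by blast

lemma rainbow_free_subset: "rainbow_free W c \<Longrightarrow> W' \<subseteq> W \<Longrightarrow> rainbow_free W' c"
  unfolding rainbow_free_def by blast

lemma complete_ec_graph_sym:
  "complete_ec_graph W c \<Longrightarrow> x \<in> W \<Longrightarrow> y \<in> W \<Longrightarrow> x \<noteq> y \<Longrightarrow> c x y = c y x"
  unfolding complete_ec_graph_def by blast

lemma complete_ec_graph_finite: "complete_ec_graph W c \<Longrightarrow> finite W"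
  unfolding complete_ec_graph_def by simp

lemma complete_ec_graph_subset:
  "complete_ec_graph W c \<Longrightarrow> W' \<subseteq> W \<Longrightarrow> W' \<noteq> {} \<Longrightarrow> complete_ec_graph W' c"
  unfolding complete_ec_graph_def by (meson finite_subset subsetD)

lemma colors_mono: "W' \<subseteq> W \<Longrightarrow> colors W' c \<subseteq> colors W c"
  unfolding colors_def by blast

lemma card_ge_3_ex_other:
  assumes "3 \<le> card A"
  obtains l where "l \<in> A" "l \<noteq> j" "l \<noteq> k"
proof -
  have "card {j, k} \<le> 2" by (cases "j = k") auto
  then have "\<not> A \<subseteq> {j, k}" using card_mono[of "{j, k}" A] assms by auto
  then show ?thesis using that by blast
qed

lemma color_closed_Diff:
  assumes "complete_ec_graph W c" "color_closed W c j S" "S \<subseteq> W"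
  shows "color_closed W c j (W - S)"
  using assms unfolding color_closed_def by (metis Diff_iff complete_ec_graph_sym subsetD)

lemma color_componentD:
  assumes "color_component W c j X"
  shows "X \<noteq> {}" "X \<subseteq> W" "color_closed W c j X"
  using assms unfolding color_component_def by simp_all

lemma color_component_conn:
  "color_component W c j X \<Longrightarrow> Y \<subseteq> X \<Longrightarrow> Y \<noteq> {} \<Longrightarrow> Y \<noteq> X \<Longrightarrow> \<exists>y\<in>Y. \<exists>z\<in>X - Y. c y z = j"
  unfolding color_component_def by blast

lemma color_component_subset_closed:
  assumes "color_component W c j X" "color_closed W c j T" "x \<in> X" "x \<in> T"
  shows "X \<subseteq> T"
proof (rule ccontr)
  assume "\<not> X \<subseteq> T"
  then obtain y z where "y \<in> X \<inter> T" "z \<in> X - X \<inter> T" "c y z = j"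
    using color_component_conn[OF assms(1), of "X \<inter> T"] assms(3,4) by blast
  moreover note color_componentD(2)[OF assms(1)]
  ultimately show False using assms(2) unfolding color_closed_def by blast
qed

lemma color_components_disjoint:
  assumes "color_component W c j C" "color_component W c j D" "x \<in> D" "x \<notin> C"
  shows "C \<inter> D = {}"
proof (rule ccontr)
  assume "C \<inter> D \<noteq> {}"
  then obtain z where "z \<in> D" "z \<in> C" by blast
  then have "D \<subseteq> C"
    using color_component_subset_closed[OF assms(2) color_componentD(3)[OF assms(1)]] by blast
  then show False using assms(3,4) by blast
qed

lemma color_component_ne_if_disconnected:
  assumes G: "complete_ec_graph W c" and C: "color_component W c j C"
    and S: "S \<noteq> {}" "S \<subset> W" "color_closed W c j S"
  shows "C \<noteq> W"
proof -
  obtain x where x: "x \<in> C" and xW: "x \<in> W"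
    using color_componentD(1,2)[OF C] by blast
  show ?thesis
  proof (cases "x \<in> S")
    case True
    then show ?thesis using color_component_subset_closed[OF C S(3) x] S(2) by blast
  next
    case False
    have "color_closed W c j (W - S)" using color_closed_Diff[OF G S(3)] S(2) by blast
    then have "C \<subseteq> W - S" using color_component_subset_closed[OF C _ x] xW False by blast
    then show ?thesis using S(1,2) by blast
  qed
qed

lemma color_closed_split:
  assumes "complete_ec_graph W c" "color_closed W c j X" "X \<subseteq> W" "Y \<subseteq> X"
    and no_edge: "\<forall>y\<in>Y. \<forall>z\<in>X - Y. c y z \<noteq> j"
  shows "color_closed W c j Y" "color_closed W c j (X - Y)"
proof -
  show "color_closed W c j Y"
    using assms(2,4) no_edge unfolding color_closed_def by blast
  show "color_closed W c j (X - Y)"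
    unfolding color_closed_def
  proof (intro ballI)
    fix x w assume x: "x \<in> X - Y" and w: "w \<in> W - (X - Y)"
    show "c x w \<noteq> j"
    proof (cases "w \<in> Y")
      case True
      then have "c w x \<noteq> j" using no_edge x by blast
      moreover have "c x w = c w x"
        using complete_ec_graph_sym[OF assms(1)] x w \<open>w \<in> Y\<close> assms(3) by blast
      ultimately show ?thesis by simp
    next
      case False
      then show ?thesis using assms(2) x w unfolding color_closed_def by blast
    qed
  qed
qed

lemma color_component_exists:
  assumes G: "complete_ec_graph W c" and d: "d \<in> W"
  obtains X where "color_component W c j X" "d \<in> X"
proof -
  let ?F = "\<lambda>X. X \<subseteq> W \<and> d \<in> X \<and> color_closed W c j X"
  have "?F W" using d unfolding color_closed_def by auto
  then obtain X where X: "?F X" and min: "\<And>Y. ?F Y \<Longrightarrow> card X \<le> card Y"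
    using ex_has_least_nat[of ?F W card] by blast
  have fin: "finite X"
    using X complete_ec_graph_finite[OF G] finite_subset by blast
  have "\<exists>y\<in>Y. \<exists>z\<in>X - Y. c y z = j" if Y: "Y \<subseteq> X" "Y \<noteq> {}" "Y \<noteq> X" for Y
  proof (rule ccontr)
    assume "\<not> ?thesis"
    then have "color_closed W c j Y" "color_closed W c j (X - Y)"
      using color_closed_split[OF G _ _ Y(1)] X by blast+
    then have "?F Y \<or> ?F (X - Y)" using X Y(1) by blast
    moreover have "card Y < card X" "card (X - Y) < card X"
      using Y fin by (auto intro: psubset_card_mono)
    ultimately show False using min by (meson not_le)
  qed
  then have "color_component W c j X"
    using X unfolding color_component_def by blast
  then show ?thesis using that X by blast
qed

lemma is_moduleD:
  assumes "is_module V c X" "u \<in> X" "u' \<in> X" "v \<in> V - X"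
  shows "c u v = c u' v"
  using conjunct2[OF assms(1)[unfolded is_module_def]] assms(2-4) by (meson bspec)

lemma is_module_subset: "is_module V c X \<Longrightarrow> X \<subseteq> V"
  unfolding is_module_def by (elim conjunct1)

text \<open>If a vertex v outside C saw C in two colours, some j-edge yz of C would join the
  two colour classes, and v y z would be a rainbow triangle.\<close>
lemma color_component_module:
  assumes rf: "rainbow_free W c" and C: "color_component W c j C"
  shows "is_module W c C"
  unfolding is_module_def
proof (intro conjI ballI)
  show CW: "C \<subseteq> W" using color_componentD(2)[OF C] .
  fix v u u' assume v: "v \<in> W - C" and u: "u \<in> C" and u': "u' \<in> C"
  show "c u v = c u' v"
  proof (rule ccontr)
    assume ne: "c u v \<noteq> c u' v"
    let ?Y = "{z \<in> C. c z v = c u v}"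
    have "?Y \<subseteq> C" "?Y \<noteq> {}" using u by blast+
    moreover have "?Y \<noteq> C" using u' ne by (metis (mono_tags, lifting) mem_Collect_eq)
    ultimately obtain y z where yz: "y \<in> ?Y" "z \<in> C - ?Y" "c y z = j"
      using color_component_conn[OF C] by meson
    then have in_C: "y \<in> C" "z \<in> C" and "c y v \<noteq> c z v" by auto
    then have "y \<noteq> z" by auto
    moreover have "c y v \<noteq> j" "c z v \<noteq> j"
      using color_componentD(3)[OF C] in_C v unfolding color_closed_def by blast+
    moreover have "y \<noteq> v" "z \<noteq> v" using in_C v by auto
    ultimately show False
      using rainbow_freeD[OF rf, of y z v] in_C CW v yz(3) \<open>c y v \<noteq> c z v\<close> by auto
  qed
qed

lemma color_components_edge_color:
  assumes G: "complete_ec_graph W c" and rf: "rainbow_free W c"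
    and C: "color_component W c j C" and D: "color_component W c j D" and CD: "C \<inter> D = {}"
    and x: "x \<in> C" "x' \<in> C" and y: "y \<in> D" "y' \<in> D"
  shows "c x y = c x' y'"
proof -
  note W = color_componentD(2)[OF C] color_componentD(2)[OF D]
  have out: "y \<in> W - C" "x' \<in> W - D" using x y W CD by blast+
  have ne: "x' \<noteq> y" "x' \<noteq> y'" using x y CD by auto
  have "c x y = c x' y" using is_moduleD[OF color_component_module[OF rf C] x out(1)] .
  also have "\<dots> = c y x'" using complete_ec_graph_sym[OF G _ _ ne(1)] x y W by blast
  also have "\<dots> = c y' x'" using is_moduleD[OF color_component_module[OF rf D] y out(2)] .
  also have "\<dots> = c x' y'" using complete_ec_graph_sym[OF G _ _ ne(2)] x y W by (simp add: subset_iff)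
  finally show ?thesis .
qed

text \<open>Otherwise a j-edge of C leaves N at some z, and a vertex of N outside C sees z
  in colour j as well.\<close>
lemma color_component_module_nested_or_disjoint:
  assumes G: "complete_ec_graph W c" and C: "color_component W c j C" and N: "is_module W c N"
  shows "C \<subseteq> N \<or> N \<subseteq> C \<or> C \<inter> N = {}"
proof (rule ccontr)
  assume "\<not> ?thesis"
  then have "C \<inter> N \<subseteq> C" "C \<inter> N \<noteq> {}" "C \<inter> N \<noteq> C" and "\<not> N \<subseteq> C" by blast+
  then obtain y z where y: "y \<in> C \<inter> N" and z: "z \<in> C - C \<inter> N" and "c y z = j"
    using color_component_conn[OF C] by meson
  obtain w where w: "w \<in> N" "w \<notin> C" using \<open>\<not> N \<subseteq> C\<close> by blast
  have CW: "C \<subseteq> W" and NW: "N \<subseteq> W"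
    using color_componentD(2)[OF C] is_module_subset[OF N] .
  have "c w z = c y z" using is_moduleD[OF N w(1) _ , of y z] y z CW by blast
  also have "c w z = c z w" using complete_ec_graph_sym[OF G, of w z] w z CW NW by blast
  finally have "c z w = j" using \<open>c y z = j\<close> by simp
  moreover have "c z w \<noteq> j"
    using color_componentD(3)[OF C] z w NW unfolding color_closed_def by blast
  ultimately show False by simp
qed

lemma color_connected_edge_at:
  assumes v: "v \<in> W" "W \<noteq> {v}"
    and conn: "\<And>S. S \<noteq> {} \<Longrightarrow> S \<subset> W \<Longrightarrow> \<not> color_closed W c j S"
  obtains b where "b \<in> W - {v}" "c v b = j"
proof -
  have "{v} \<subset> W" using v by auto
  then have "\<not> color_closed W c j {v}" using conn by simp
  then show ?thesis using that unfolding color_closed_def by blast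
qed

text \<open>Pick x with c v x = l for a colour l other than i; the i-edge leaving {x}
  cannot go to v.\<close>
lemma colors_Diff_vertex:
  assumes G: "complete_ec_graph W c" and three: "3 \<le> card (colors W c)" and v: "v \<in> W"
    and conn: "\<And>j S. j \<in> colors W c \<Longrightarrow> S \<noteq> {} \<Longrightarrow> S \<subset> W \<Longrightarrow> \<not> color_closed W c j S"
  shows "colors (W - {v}) c = colors W c"
proof
  show "colors (W - {v}) c \<subseteq> colors W c" by (rule colors_mono) blast
  show "colors W c \<subseteq> colors (W - {v}) c"
  proof
    fix i assume i: "i \<in> colors W c"
    then have "W \<noteq> {v}" unfolding colors_def by auto
    obtain l where l: "l \<in> colors W c" "l \<noteq> i"
      using card_ge_3_ex_other[OF three, where j = i and k = i] by blast
    obtain x where x: "x \<in> W - {v}" "c v x = l"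
      using color_connected_edge_at[OF v \<open>W \<noteq> {v}\<close> conn[OF l(1)]] by blast
    have "{x} \<subset> W" using x v by auto
    then have "\<not> color_closed W c i {x}" using conn[OF i] by simp
    then obtain z where z: "z \<in> W - {x}" "c x z = i" unfolding color_closed_def by blast
    have "z \<noteq> v"
    proof
      assume "z = v"
      then have "c x z = c v x" using complete_ec_graph_sym[OF G] x v by auto
      then show False using x(2) z(2) l(2) by simp
    qed
    then show "i \<in> colors (W - {v}) c" unfolding colors_def using x z by blast
  qed
qed

lemma color_component_Diff_vertex_adjacent:
  assumes D: "color_component (W - {v}) c j D" and v: "v \<in> W"
    and conn: "\<And>S. S \<noteq> {} \<Longrightarrow> S \<subset> W \<Longrightarrow> \<not> color_closed W c j S"
  obtains a where "a \<in> D" "c a v = j"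
proof -
  have "D \<noteq> {}" "D \<subset> W" using color_componentD(1,2)[OF D] v by auto
  then obtain a y where a: "a \<in> D" "y \<in> W - D" "c a y = j"
    using conn unfolding color_closed_def by blast
  have "y = v"
  proof (rule ccontr)
    assume "y \<noteq> v"
    then have "y \<in> (W - {v}) - D" using a by blast
    then show False using color_componentD(3)[OF D] a unfolding color_closed_def by blast
  qed
  then show ?thesis using that a by blast
qed

lemma color_component_Diff_vertex_edge_color:
  assumes G: "complete_ec_graph W c" and rf: "rainbow_free W c" and v: "v \<in> W"
    and conn: "\<And>S. S \<noteq> {} \<Longrightarrow> S \<subset> W \<Longrightarrow> \<not> color_closed W c j S"
    and C: "color_component (W - {v}) c j C" and b: "b \<in> C" "c v b \<noteq> j"
    and x: "x \<in> C" and d: "d \<in> W - {v} - C"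
  shows "c d x = c v b"
proof -
  have G': "complete_ec_graph (W - {v}) c"
    using complete_ec_graph_subset[OF G] color_componentD(2)[OF C] b(1) by blast
  have rf': "rainbow_free (W - {v}) c" using rainbow_free_subset[OF rf] by blast
  obtain D where D: "color_component (W - {v}) c j D" "d \<in> D"
    using color_component_exists[OF G'] d by blast
  have CD: "C \<inter> D = {}" using color_components_disjoint[OF C D] d by blast
  obtain a where a: "a \<in> D" "c a v = j" using color_component_Diff_vertex_adjacent[OF D(1) v conn] .
  have W': "a \<in> W - {v}" "b \<in> W - {v}" "x \<in> W - {v}"
    using a(1) b(1) x color_componentD(2)[OF C] color_componentD(2)[OF D(1)] by blast+
  have ne: "a \<noteq> b" "a \<noteq> v" "b \<noteq> v" "d \<noteq> x" using a(1) b(1) d x CD W' by auto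
  have "c b a \<noteq> j"
    using color_componentD(3)[OF C] b(1) a(1) W'(1) CD unfolding color_closed_def by blast
  moreover have "c a b = c b a" "c v a = c a v" "c v b = c b v"
    using complete_ec_graph_sym[OF G] W' ne v by auto
  moreover have "c v a = c v b \<or> c v a = c a b \<or> c v b = c a b"
    using rainbow_freeD[OF rf v, of a b] W'(1,2) ne by auto
  ultimately have "c a b = c v b" using a(2) b(2) by auto
  moreover have "c x d = c b a"
    using color_components_edge_color[OF G' rf' C D(1) CD x b(1) D(2) a(1)] .
  moreover have "c d x = c x d" using complete_ec_graph_sym[OF G'] W'(3) d ne(4) by simp
  ultimately show ?thesis using \<open>c a b = c b a\<close> by simp
qed

text \<open>If colour j is connected on W but C is a proper
  j-component of W - {v}, then every other j-component is joined to C only in the colour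
  k of an edge vb into C, and it contains a vertex a with c a v = j. The triangles v a x
  then force every edge from v to C into the colours j and k, so no third colour leaves C.\<close>
lemma color_component_closed_third_color:
  assumes G: "complete_ec_graph W c" and rf: "rainbow_free W c" and v: "v \<in> W"
    and conn: "\<And>S. S \<noteq> {} \<Longrightarrow> S \<subset> W \<Longrightarrow> \<not> color_closed W c j S"
    and C: "color_component (W - {v}) c j C" "C \<noteq> W - {v}"
    and b: "b \<in> C" "c v b \<noteq> j"
    and l: "l \<noteq> j" "l \<noteq> c v b"
  shows "color_closed W c l C"
proof -
  note CW' = color_componentD(2)[OF C(1)]
  have G': "complete_ec_graph (W - {v}) c" using complete_ec_graph_subset[OF G] CW' b(1) by blast
  have outside: "c d x = c v b" if "x \<in> C" "d \<in> W - {v} - C" for x d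
    using color_component_Diff_vertex_edge_color[OF G rf v conn C(1) b that] .
  obtain d where d: "d \<in> W - {v} - C" using C(2) CW' by blast
  obtain D where D: "color_component (W - {v}) c j D" "d \<in> D"
    using color_component_exists[OF G'] d by blast
  obtain a where a: "a \<in> D" "c a v = j"
    using color_component_Diff_vertex_adjacent[OF D(1) v conn] .
  have a_out: "a \<in> W - {v} - C"
    using a(1) color_components_disjoint[OF C(1) D] d color_componentD(2)[OF D(1)] by blast
  have v_to_C: "c x v = j \<or> c x v = c v b" if x: "x \<in> C" for x
  proof -
    have W: "x \<in> W" "a \<in> W" and ne: "a \<noteq> x" "v \<noteq> x" "v \<noteq> a" using x CW' a_out by auto
    have "c v a = j" "c v x = c x v" using complete_ec_graph_sym[OF G] a(2) W v ne by auto
    moreover have "c a x = c v b" using outside[OF x a_out] .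
    moreover have "c v a = c v x \<or> c v a = c a x \<or> c v x = c a x"
      using rainbow_freeD[OF rf v W(2,1) ne(3,1,2)] .
    ultimately show ?thesis using b(2) by auto
  qed
  show ?thesis
    unfolding color_closed_def
  proof (intro ballI)
    fix x y assume x: "x \<in> C" and y: "y \<in> W - C"
    show "c x y \<noteq> l"
    proof (cases "y = v")
      case True
      then show ?thesis using v_to_C[OF x] l by auto
    next
      case False
      then have "y \<in> W - {v} - C" "x \<noteq> y" using x y by auto
      moreover have "c x y = c y x" using complete_ec_graph_sym[OF G'] x y CW' False by auto
      ultimately show ?thesis using outside[OF x] l(2) by simp
    qed
  qed
qed

theorem gallai_disconnected_color:
  assumes "complete_ec_graph W c" "rainbow_free W c" "3 \<le> card (colors W c)"
  shows "\<exists>j\<in>colors W c. \<exists>S. S \<noteq> {} \<and> S \<subset> W \<and> color_closed W c j S"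
  using assms
proof (induction "card W" arbitrary: W rule: less_induct)
  case less
  note G = less.prems(1) and rf = less.prems(2) and three = less.prems(3)
  show ?case
  proof (rule ccontr)
    assume "\<not> ?case"
    then have conn: "\<And>j S. j \<in> colors W c \<Longrightarrow> S \<noteq> {} \<Longrightarrow> S \<subset> W \<Longrightarrow> \<not> color_closed W c j S"
      by blast
    have "colors W c \<noteq> {}" using three by auto
    then obtain v w where vw: "v \<in> W" "w \<in> W" "v \<noteq> w" unfolding colors_def by blast
    have W': "W - {v} \<subseteq> W" "W - {v} \<noteq> {}" "W \<noteq> {v}" using vw by auto
    have colors': "colors (W - {v}) c = colors W c" using colors_Diff_vertex[OF G three vw(1) conn] .
    have G': "complete_ec_graph (W - {v}) c" using complete_ec_graph_subset[OF G W'(1,2)] .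
    have "card (W - {v}) < card W" using card_Diff1_less[OF complete_ec_graph_finite[OF G] vw(1)] .
    moreover have "3 \<le> card (colors (W - {v}) c)" using three colors' by simp
    ultimately have "\<exists>j\<in>colors (W - {v}) c. \<exists>S. S \<noteq> {} \<and> S \<subset> W - {v} \<and> color_closed (W - {v}) c j S"
      using less.hyps[OF _ G' rainbow_free_subset[OF rf W'(1)]] by blast
    then obtain j S where j: "j \<in> colors W c"
      and S: "S \<noteq> {}" "S \<subset> W - {v}" "color_closed (W - {v}) c j S"
      unfolding colors' by blast
    obtain l where "l \<in> colors W c" "l \<noteq> j"
      using card_ge_3_ex_other[OF three, where j = j and k = j] by blast
    then obtain b where b: "b \<in> W - {v}" "c v b \<noteq> j"
      using color_connected_edge_at[OF vw(1) W'(3) conn] by metis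
    obtain C where C: "color_component (W - {v}) c j C" "b \<in> C"
      using color_component_exists[OF G' b(1)] by blast
    have "C \<noteq> W - {v}"
      using color_component_ne_if_disconnected[OF G' C(1) S] .
    obtain l' where l': "l' \<in> colors W c" "l' \<noteq> j" "l' \<noteq> c v b"
      using card_ge_3_ex_other[OF three, where j = j and k = "c v b"] by blast
    have "color_closed W c l' C"
      using color_component_closed_third_color[OF G rf vw(1) conn[OF j] C(1) \<open>C \<noteq> W - {v}\<close>
          C(2) b(2) l'(2,3)] .
    moreover have "C \<noteq> {}" "C \<subset> W" using color_componentD(1,2)[OF C(1)] vw(1) by auto
    ultimately show False using conn[OF l'(1)] by blast
  qed
qed

section \<open>Permutation graphs\<close>

lemma mem_color_class_iff:
  assumes G: "complete_ec_graph W c" and "u \<in> W" "v \<in> W"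
  shows "{u, v} \<in> color_class W c i \<longleftrightarrow> u \<noteq> v \<and> c u v = i"
proof
  assume "{u, v} \<in> color_class W c i"
  then obtain a b where ab: "{u, v} = {a, b}" "a \<in> W" "b \<in> W" "a \<noteq> b" "c a b = i"
    unfolding color_class_def by blast
  then have "u = a \<and> v = b \<or> u = b \<and> v = a" by (simp add: doubleton_eq_iff)
  then show "u \<noteq> v \<and> c u v = i"
    using ab complete_ec_graph_sym[OF G ab(2,3,4)] by auto
next
  assume "u \<noteq> v \<and> c u v = i"
  then show "{u, v} \<in> color_class W c i" unfolding color_class_def using assms(2,3) by blast
qed

lemma simple_perm_graph_outer_edge:
  assumes G: "complete_ec_graph W c"
    and perm: "simple_perm_graph W (color_class W c (c x z)) lab \<pi>"
    and xyz: "x \<in> W" "y \<in> W" "z \<in> W" "lab x < lab y" "lab y < lab z"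
  shows "c x z = c x y \<or> c x z = c y z"
proof -
  define p where "p u = inv_into {1..card W} \<pi> (lab u)" for u
  have edge: "{u, v} \<in> color_class W c (c x z) \<longleftrightarrow> p u < p v"
    if "u \<in> W" "v \<in> W" "lab v < lab u" for u v
    using perm that unfolding simple_perm_graph_def p_def by blast
  have ne: "x \<noteq> y" "y \<noteq> z" "z \<noteq> x" using xyz(4,5) by auto
  have "{z, x} \<in> color_class W c (c x z)"
    using mem_color_class_iff[OF G xyz(3,1)] complete_ec_graph_sym[OF G xyz(3,1) ne(3)] ne(3) by simp
  then have "p z < p x" using edge[OF xyz(3,1)] xyz(4,5) by simp
  then consider "p y < p x" | "p z < p y" by linarith
  then show ?thesis
  proof cases
    case 1
    then have "{y, x} \<in> color_class W c (c x z)" using edge[OF xyz(2,1) xyz(4)] by simp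
    then have "c y x = c x z" using mem_color_class_iff[OF G xyz(2,1)] by simp
    then show ?thesis using complete_ec_graph_sym[OF G xyz(1,2) ne(1)] by simp
  next
    case 2
    then have "{z, y} \<in> color_class W c (c x z)" using edge[OF xyz(3,2) xyz(5)] by simp
    then have "c z y = c x z" using mem_color_class_iff[OF G xyz(3,2)] by simp
    then show ?thesis using complete_ec_graph_sym[OF G xyz(2,3) ne(2)] by simp
  qed
qed

lemma ec_perm_graph_complete: "ec_perm_graph W c \<Longrightarrow> complete_ec_graph W c"
  unfolding ec_perm_graph_def by simp

lemma ec_perm_graph_rainbow_free:
  assumes "ec_perm_graph W c"
  shows "rainbow_free W c"
proof -
  have G: "complete_ec_graph W c" using ec_perm_graph_complete[OF assms] .
  obtain lab where lab: "bij_betw lab W {1..card W}"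
    and perm: "\<forall>i\<in>colors W c. \<exists>\<pi>. bij_betw \<pi> {1..card W} {1..card W} \<and>
        simple_perm_graph W (color_class W c i) lab \<pi>"
    using assms unfolding ec_perm_graph_def by blast
  have outer: "c x z = c x y \<or> c x z = c y z"
    if xyz: "x \<in> W" "y \<in> W" "z \<in> W" "lab x < lab y" "lab y < lab z" for x y z
  proof -
    have "c x z \<in> colors W c" unfolding colors_def using xyz by force
    then obtain \<pi> where "simple_perm_graph W (color_class W c (c x z)) lab \<pi>" using perm by blast
    then show ?thesis using simple_perm_graph_outer_edge[OF G _ xyz] by blast
  qed
  show ?thesis
    unfolding rainbow_free_def
  proof (intro ballI impI)
    fix x y z assume xyz: "x \<in> W" "y \<in> W" "z \<in> W" "x \<noteq> y \<and> y \<noteq> z \<and> x \<noteq> z"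
    have "lab x \<noteq> lab y" "lab y \<noteq> lab z" "lab x \<noteq> lab z"
      using xyz inj_onD[OF bij_betw_imp_inj_on[OF lab]] by blast+
    then consider "lab x < lab y" "lab y < lab z" | "lab x < lab z" "lab z < lab y"
      | "lab y < lab x" "lab x < lab z" | "lab y < lab z" "lab z < lab x"
      | "lab z < lab x" "lab x < lab y" | "lab z < lab y" "lab y < lab x"
      by linarith
    moreover have "c x y = c y x" "c x z = c z x" "c y z = c z y"
      using complete_ec_graph_sym[OF G] xyz by auto
    ultimately show "c x y = c x z \<or> c x y = c y z \<or> c x z = c y z"
      using outer[of x y z] outer[of x z y] outer[of y x z] outer[of y z x]
        outer[of z x y] outer[of z y x] xyz(1-3) by cases auto
  qed
qed

definition rank_in :: "('a \<Rightarrow> 'b::linorder) \<Rightarrow> 'a set \<Rightarrow> 'a \<Rightarrow> nat" where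
  "rank_in g W x = card {y \<in> W. g y < g x} + 1"

lemma rank_in_strict_mono:
  assumes "finite W" "x \<in> W" "g x < g y"
  shows "rank_in g W x < rank_in g W y"
proof -
  have "{z \<in> W. g z < g x} \<subset> {z \<in> W. g z < g y}"
    using assms(2,3) by (auto intro: less_trans)
  then show ?thesis unfolding rank_in_def using assms(1) by (simp add: psubset_card_mono)
qed

lemma rank_in_less_iff:
  assumes "finite W" "inj_on g W" "x \<in> W" "y \<in> W"
  shows "rank_in g W x < rank_in g W y \<longleftrightarrow> g x < g y"
  using rank_in_strict_mono[OF assms(1,3), of g y] rank_in_strict_mono[OF assms(1,4), of g x]
    inj_onD[OF assms(2) _ assms(3,4)]
  by (cases "g x" "g y" rule: linorder_cases) auto

lemma bij_betw_rank_in: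
  assumes fin: "finite W" and inj: "inj_on g W"
  shows "bij_betw (rank_in g W) W {1..card W}"
proof -
  have inj_rank: "inj_on (rank_in g W) W"
    by (rule inj_onI) (metis rank_in_less_iff[OF fin inj] inj_onD[OF inj] less_irrefl linorder_neqE)
  have "rank_in g W x \<in> {1..card W}" if x: "x \<in> W" for x
  proof -
    have "card {y \<in> W. g y < g x} \<le> card (W - {x})"
      using fin by (intro card_mono) auto
    also have "\<dots> < card W" using card_Diff1_less[OF fin x] .
    finally show ?thesis unfolding rank_in_def by simp
  qed
  then have "rank_in g W ` W \<subseteq> {1..card W}" by blast
  moreover have "card (rank_in g W ` W) = card {1..card W}"
    using card_image[OF inj_rank] by simp
  ultimately have "rank_in g W ` W = {1..card W}" by (intro card_subset_eq) auto
  then show ?thesis using inj_rank unfolding bij_betw_def by blast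
qed

lemma simple_perm_graph_of_order:
  fixes q :: "'a \<Rightarrow> 'b::linorder"
  assumes fin: "finite W" and lab: "bij_betw lab W {1..card W}" and q: "inj_on q W"
    and edge: "\<And>u v. u \<in> W \<Longrightarrow> v \<in> W \<Longrightarrow> lab v < lab u \<Longrightarrow> ({u, v} \<in> E \<longleftrightarrow> q u < q v)"
  shows "\<exists>\<pi>. bij_betw \<pi> {1..card W} {1..card W} \<and> simple_perm_graph W E lab \<pi>"
proof -
  define r where "r = rank_in q W"
  have r: "bij_betw r W {1..card W}" unfolding r_def by (rule bij_betw_rank_in[OF fin q])
  define \<pi> where "\<pi> = lab \<circ> inv_into W r"
  have \<pi>: "bij_betw \<pi> {1..card W} {1..card W}"
    unfolding \<pi>_def by (rule bij_betw_trans[OF bij_betw_inv_into[OF r] lab])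
  have inv_\<pi>: "inv_into {1..card W} \<pi> (lab u) = r u" if u: "u \<in> W" for u
  proof -
    have "r u \<in> {1..card W}" using bij_betw_apply[OF r u] .
    moreover have "\<pi> (r u) = lab u"
      unfolding \<pi>_def using inv_into_f_f[OF bij_betw_imp_inj_on[OF r] u] by simp
    ultimately show ?thesis using inv_into_f_f[OF bij_betw_imp_inj_on[OF \<pi>]] by metis
  qed
  have "simple_perm_graph W E lab \<pi>"
    unfolding simple_perm_graph_def
    using edge inv_\<pi> rank_in_less_iff[OF fin q] unfolding r_def by simp
  then show ?thesis using \<pi> by blast
qed

lemma complete_ec_graph_inj_pullback:
  assumes G: "complete_ec_graph V c" and W: "finite W" "W \<noteq> {}"
    and f: "inj_on f W" "f ` W \<subseteq> V"
  shows "complete_ec_graph W (\<lambda>u v. c (f u) (f v))"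
  unfolding complete_ec_graph_def
proof (intro conjI ballI impI)
  fix u v assume uv: "u \<in> W" "v \<in> W" "u \<noteq> v"
  then have "f u \<noteq> f v" using inj_onD[OF f(1)] by blast
  then show "c (f u) (f v) = c (f v) (f u)" using complete_ec_graph_sym[OF G] uv f(2) by blast
qed (use W in auto)

lemma simple_perm_graph_inj_pullback:
  assumes G: "complete_ec_graph V c" and lab: "bij_betw lab V {1..card V}"
    and \<pi>: "bij_betw \<pi> {1..card V} {1..card V}"
    and perm: "simple_perm_graph V (color_class V c i) lab \<pi>"
    and W: "finite W" "W \<noteq> {}" and f: "inj_on f W" "f ` W \<subseteq> V"
  shows "\<exists>\<pi>'. bij_betw \<pi>' {1..card W} {1..card W} \<and>
    simple_perm_graph W (color_class W (\<lambda>u v. c (f u) (f v)) i) (rank_in (lab \<circ> f) W) \<pi>'"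
proof -
  have GW: "complete_ec_graph W (\<lambda>u v. c (f u) (f v))"
    using complete_ec_graph_inj_pullback[OF G W f] .
  have inj_lab_f: "inj_on (lab \<circ> f) W"
    using comp_inj_on[OF f(1) inj_on_subset[OF bij_betw_imp_inj_on[OF lab] f(2)]] .
  define p where "p u = inv_into {1..card V} \<pi> (lab u)" for u
  have "inj_on p V"
    unfolding p_def using bij_betw_imp_inj_on[OF bij_betw_trans[OF lab bij_betw_inv_into[OF \<pi>]]]
    by (simp add: comp_def)
  then have inj_p_f: "inj_on (p \<circ> f) W" using comp_inj_on[OF f(1) inj_on_subset[OF _ f(2)]] by blast
  show ?thesis
  proof (rule simple_perm_graph_of_order[OF W(1) bij_betw_rank_in[OF W(1) inj_lab_f] inj_p_f])
    fix u v assume uv: "u \<in> W" "v \<in> W" "rank_in (lab \<circ> f) W v < rank_in (lab \<circ> f) W u"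
    then have ne: "u \<noteq> v" "f u \<noteq> f v" using inj_onD[OF f(1)] by auto
    have fV: "f u \<in> V" "f v \<in> V" using uv f(2) by blast+
    have lab_f: "lab (f v) < lab (f u)" using uv rank_in_less_iff[OF W(1) inj_lab_f] by simp
    have "{u, v} \<in> color_class W (\<lambda>u v. c (f u) (f v)) i \<longleftrightarrow> c (f u) (f v) = i"
      using mem_color_class_iff[OF GW uv(1,2)] ne(1) by simp
    also have "\<dots> \<longleftrightarrow> {f u, f v} \<in> color_class V c i"
      using mem_color_class_iff[OF G fV] ne(2) by simp
    also have "\<dots> \<longleftrightarrow> p (f u) < p (f v)"
      using perm fV lab_f unfolding simple_perm_graph_def p_def by blast
    finally show "{u, v} \<in> color_class W (\<lambda>u v. c (f u) (f v)) i \<longleftrightarrow> (p \<circ> f) u < (p \<circ> f) v"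
      by simp
  qed
qed

lemma ec_perm_graph_inj_pullback:
  assumes G: "ec_perm_graph V c" and W: "finite W" "W \<noteq> {}" and f: "inj_on f W" "f ` W \<subseteq> V"
  shows "ec_perm_graph W (\<lambda>u v. c (f u) (f v))"
proof -
  have GV: "complete_ec_graph V c" using ec_perm_graph_complete[OF G] .
  obtain lab where lab: "bij_betw lab V {1..card V}"
    and perm: "\<forall>i\<in>colors V c. \<exists>\<pi>. bij_betw \<pi> {1..card V} {1..card V} \<and>
        simple_perm_graph V (color_class V c i) lab \<pi>"
    using G unfolding ec_perm_graph_def by blast
  have "colors W (\<lambda>u v. c (f u) (f v)) \<subseteq> colors V c"
    unfolding colors_def using f inj_onD[OF f(1)] by blast
  then have "\<forall>i\<in>colors W (\<lambda>u v. c (f u) (f v)). \<exists>\<pi>'. bij_betw \<pi>' {1..card W} {1..card W} \<and>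
      simple_perm_graph W (color_class W (\<lambda>u v. c (f u) (f v)) i) (rank_in (lab \<circ> f) W) \<pi>'"
    using perm simple_perm_graph_inj_pullback[OF GV lab _ _ W f] by blast
  moreover have "bij_betw (rank_in (lab \<circ> f) W) W {1..card W}"
    using bij_betw_rank_in[OF W(1) comp_inj_on[OF f(1) inj_on_subset[OF bij_betw_imp_inj_on[OF lab] f(2)]]] .
  ultimately show ?thesis
    using complete_ec_graph_inj_pullback[OF GV W f] unfolding ec_perm_graph_def by blast
qed

section \<open>Modules and quotients\<close>

definition rep :: "'a set \<Rightarrow> 'a" where
  "rep X = (SOME u. u \<in> X)"

lemma rep_in: "X \<noteq> {} \<Longrightarrow> rep X \<in> X"
  unfolding rep_def by (simp add: some_in_eq)

lemma quot_col_rep: "quot_col c X Y = c (rep X) (rep Y)"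
  unfolding quot_col_def rep_def ..

lemma strong_moduleD:
  assumes "strong_module V c X"
  shows "is_module V c X" "X \<noteq> {}" "X \<subseteq> V"
proof -
  show module: "is_module V c X" and "X \<noteq> {}" using assms unfolding strong_module_def by simp_all
  show "X \<subseteq> V" using is_module_subset[OF module] .
qed

lemma strong_module_nested_or_disjoint:
  "strong_module V c X \<Longrightarrow> is_module V c N \<Longrightarrow> X \<subseteq> N \<or> N \<subseteq> X \<or> X \<inter> N = {}"
  unfolding strong_module_def by blast

lemma strong_module_singleton:
  assumes "x \<in> V"
  shows "strong_module V c {x}"
proof -
  have "is_module V c {x}" unfolding is_module_def using assms by simp
  then show ?thesis unfolding strong_module_def by auto
qed

lemma quot_col_modules:
  assumes G: "complete_ec_graph V c" and X: "is_module V c X" "X \<noteq> {}"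
    and Y: "is_module V c Y" "Y \<noteq> {}" and XY: "X \<inter> Y = {}" and x: "x \<in> X" and y: "y \<in> Y"
  shows "quot_col c X Y = c x y"
proof -
  have rX: "rep X \<in> X" and rY: "rep Y \<in> Y" using rep_in[OF X(2)] rep_in[OF Y(2)] .
  have V: "X \<subseteq> V" "Y \<subseteq> V" using is_module_subset[OF X(1)] is_module_subset[OF Y(1)] .
  have out: "y \<in> V - X" "rep X \<in> V - Y" and in_V: "rep X \<in> V" "rep Y \<in> V" "y \<in> V"
    using rX rY y V XY by blast+
  have ne: "rep X \<noteq> rep Y" "y \<noteq> rep X" using rX rY y XY by auto
  have "quot_col c X Y = c (rep X) (rep Y)" by (rule quot_col_rep)
  also have "\<dots> = c (rep Y) (rep X)" using complete_ec_graph_sym[OF G in_V(1,2) ne(1)] .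
  also have "\<dots> = c y (rep X)" using is_moduleD[OF Y(1) rY y out(2)] .
  also have "\<dots> = c (rep X) y" using complete_ec_graph_sym[OF G in_V(3,1) ne(2)] .
  also have "\<dots> = c x y" using is_moduleD[OF X(1) rX x out(1)] .
  finally show ?thesis .
qed

lemma PmaxD:
  assumes "X \<in> Pmax V c M"
  shows "strong_module V c X" "X \<subset> M"
  using assms unfolding Pmax_def by blast+

lemma Pmax_maximal: "X \<in> Pmax V c M \<Longrightarrow> strong_module V c N \<Longrightarrow> N \<subset> M \<Longrightarrow> X \<subseteq> N \<Longrightarrow> N = X"
  unfolding Pmax_def by blast

lemma Pmax_disjoint:
  assumes X: "X \<in> Pmax V c M" and Y: "Y \<in> Pmax V c M" and "X \<noteq> Y"
  shows "X \<inter> Y = {}"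
  using strong_module_nested_or_disjoint[OF PmaxD(1)[OF X] strong_moduleD(1)[OF PmaxD(1)[OF Y]]]
    Pmax_maximal[OF X PmaxD(1)[OF Y] PmaxD(2)[OF Y]] Pmax_maximal[OF Y PmaxD(1)[OF X] PmaxD(2)[OF X]]
    \<open>X \<noteq> Y\<close> by blast

lemma finite_Pmax: "finite V \<Longrightarrow> finite (Pmax V c M)"
  using strong_moduleD(3)[OF PmaxD(1)] by (metis Pow_iff finite_Pow_iff rev_finite_subset subsetI)

lemma Union_Pmax:
  assumes V: "finite V" and M: "M \<subseteq> V" "2 \<le> card M"
  shows "\<Union>(Pmax V c M) = M"
proof
  show "\<Union>(Pmax V c M) \<subseteq> M" using PmaxD(2) by blast
  show "M \<subseteq> \<Union>(Pmax V c M)"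
  proof
    fix x assume x: "x \<in> M"
    let ?F = "\<lambda>N. strong_module V c N \<and> N \<subset> M \<and> x \<in> N"
    have fin: "finite M" using V M(1) finite_subset by blast
    have "{x} \<noteq> M" using M(2) by force
    then have "{x} \<subset> M" using x by auto
    moreover have "strong_module V c {x}" using x M(1) by (auto intro: strong_module_singleton)
    ultimately have "?F {x}" by simp
    moreover have "card N < card M + 1" if "?F N" for N
      using card_mono[OF fin psubset_imp_subset, of N] that by simp
    ultimately obtain N where N: "?F N" and max: "\<And>N'. ?F N' \<Longrightarrow> card N' \<le> card N"
      using ex_has_greatest_nat[of ?F "{x}" card "card M + 1"] by blast
    have "N \<in> Pmax V c M"
      unfolding Pmax_def
    proof (intro CollectI conjI allI impI)
      fix N' assume N': "strong_module V c N' \<and> N' \<subset> M \<and> N \<subseteq> N'"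
      then have "card N' \<le> card N" using N max by blast
      moreover have "finite N'" using N' fin finite_subset by blast
      ultimately show "N' = N" using card_seteq N' by blast
    qed (use N in blast)+
    then show "x \<in> \<Union>(Pmax V c M)" using N by blast
  qed
qed

lemma two_le_card_Pmax:
  assumes V: "finite V" and M: "M \<subseteq> V" "2 \<le> card M"
  shows "2 \<le> card (Pmax V c M)"
proof -
  note cover = Union_Pmax[OF V M]
  obtain x where "x \<in> M" using M(2) by fastforce
  then obtain X where X: "X \<in> Pmax V c M" "x \<in> X" using cover by blast
  then obtain y where "y \<in> M" "y \<notin> X" using PmaxD(2)[OF X(1)] by auto
  then obtain Y where Y: "Y \<in> Pmax V c M" "y \<in> Y" using cover by blast
  then have "X \<noteq> Y" using \<open>y \<notin> X\<close> by auto
  then have "card {X, Y} = 2" by simp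
  moreover have "card {X, Y} \<le> card (Pmax V c M)"
    using X(1) Y(1) by (intro card_mono finite_Pmax[OF V]) auto
  ultimately show ?thesis by simp
qed

lemma complete_ec_graph_Pmax:
  assumes G: "complete_ec_graph V c" and M: "M \<subseteq> V" "2 \<le> card M"
  shows "complete_ec_graph (Pmax V c M) (quot_col c)"
  unfolding complete_ec_graph_def
proof (intro conjI ballI impI)
  have V: "finite V" using complete_ec_graph_finite[OF G] .
  show "finite (Pmax V c M)" using finite_Pmax[OF V] .
  show "Pmax V c M \<noteq> {}" using two_le_card_Pmax[OF V M, of c] by auto
  fix X Y assume X: "X \<in> Pmax V c M" and Y: "Y \<in> Pmax V c M" and "X \<noteq> Y"
  note SX = PmaxD(1)[OF X] and SY = PmaxD(1)[OF Y]
  have rX: "rep X \<in> X" and rY: "rep Y \<in> Y"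
    using rep_in[OF strong_moduleD(2)[OF SX]] rep_in[OF strong_moduleD(2)[OF SY]] .
  have "rep X \<noteq> rep Y" using Pmax_disjoint[OF X Y \<open>X \<noteq> Y\<close>] rX rY by auto
  moreover have "rep X \<in> V" "rep Y \<in> V"
    using rX rY strong_moduleD(3)[OF SX] strong_moduleD(3)[OF SY] by blast+
  ultimately have "c (rep X) (rep Y) = c (rep Y) (rep X)" using complete_ec_graph_sym[OF G] by simp
  then show "quot_col c X Y = quot_col c Y X" unfolding quot_col_rep .
qed

lemma quot_col_Pmax:
  assumes G: "complete_ec_graph V c" and X: "X \<in> Pmax V c M" and Y: "Y \<in> Pmax V c M"
    and "X \<noteq> Y" "x \<in> X" "y \<in> Y"
  shows "quot_col c X Y = c x y"
  using quot_col_modules[OF G strong_moduleD(1,2)[OF PmaxD(1)[OF X]]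
      strong_moduleD(1,2)[OF PmaxD(1)[OF Y]] Pmax_disjoint[OF X Y \<open>X \<noteq> Y\<close>] \<open>x \<in> X\<close> \<open>y \<in> Y\<close>] .

lemma Pmax_meets_Union:
  assumes C: "C \<subseteq> Pmax V c M" and X: "X \<in> Pmax V c M" and meet: "X \<inter> \<Union>C \<noteq> {}"
  shows "X \<in> C"
proof -
  obtain X' where X': "X' \<in> C" "X \<inter> X' \<noteq> {}" using meet by blast
  then have "X = X'" using Pmax_disjoint[OF X, of X'] C by blast
  then show ?thesis using X'(1) by simp
qed

lemma Union_psubset_Pmax:
  assumes V: "finite V" and M: "M \<subseteq> V" "2 \<le> card M"
    and C: "C \<subseteq> Pmax V c M" "C \<noteq> Pmax V c M"
  shows "\<Union>C \<subset> M"
proof -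
  have "\<Union>C \<subseteq> M" using C(1) Union_Pmax[OF V M] by blast
  moreover obtain Z where Z: "Z \<in> Pmax V c M" "Z \<notin> C" using C by blast
  then have "Z \<inter> \<Union>C = {}" using Pmax_meets_Union[OF C(1)] by blast
  moreover have "Z \<noteq> {}" "Z \<subseteq> M"
    using strong_moduleD(2)[OF PmaxD(1)[OF Z(1)]] Union_Pmax[OF V M] Z(1) by blast+
  ultimately show ?thesis by blast
qed

lemma quot_vertices_blocks:
  assumes M: "strong_module V c M" and X: "X \<in> quot_vertices V c M"
  shows "X \<noteq> {}" "X \<subseteq> V"
proof -
  have "strong_module V c X"
  proof (cases "2 \<le> card M")
    case True
    then show ?thesis using X PmaxD(1) unfolding quot_vertices_def by simp
  next
    case False
    then show ?thesis using X M unfolding quot_vertices_def by simp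
  qed
  then show "X \<noteq> {}" "X \<subseteq> V" using strong_moduleD(2,3) by blast+
qed

lemma quot_vertices_disjoint:
  assumes "X \<in> quot_vertices V c M" "Y \<in> quot_vertices V c M" "X \<noteq> Y"
  shows "X \<inter> Y = {}"
proof (cases "2 \<le> card M")
  case True
  then show ?thesis using assms Pmax_disjoint unfolding quot_vertices_def by simp
next
  case False
  then show ?thesis using assms unfolding quot_vertices_def by simp
qed

lemma inj_on_rep:
  assumes "\<And>X. X \<in> \<X> \<Longrightarrow> X \<noteq> {}" and "\<And>X Y. X \<in> \<X> \<Longrightarrow> Y \<in> \<X> \<Longrightarrow> X \<noteq> Y \<Longrightarrow> X \<inter> Y = {}"
  shows "inj_on rep \<X>"
proof (rule inj_onI)
  fix X Y assume XY: "X \<in> \<X>" "Y \<in> \<X>" "rep X = rep Y"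
  then have "rep X \<in> X \<inter> Y" using rep_in[of X] rep_in[of Y] assms(1) by simp
  then show "X = Y" using assms(2)[OF XY(1,2)] by (metis empty_iff)
qed

theorem ec_perm_graph_quotient:
  assumes G: "ec_perm_graph V c" and M: "strong_module V c M"
  shows "ec_perm_graph (quot_vertices V c M) (quot_col c)"
proof -
  let ?Q = "quot_vertices V c M"
  note blocks = quot_vertices_blocks[OF M]
  have V: "finite V" using complete_ec_graph_finite[OF ec_perm_graph_complete[OF G]] .
  have "finite ?Q" using V blocks(2) by (meson Pow_iff finite_Pow_iff finite_subset subsetI)
  moreover have "?Q \<noteq> {}"
    using two_le_card_Pmax[OF V strong_moduleD(3)[OF M], of c] unfolding quot_vertices_def by auto
  moreover have "inj_on rep ?Q" using inj_on_rep blocks(1) quot_vertices_disjoint by metis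
  moreover have "rep ` ?Q \<subseteq> V"
  proof
    fix u assume "u \<in> rep ` ?Q"
    then obtain X where "X \<in> ?Q" "u = rep X" by blast
    then show "u \<in> V" using rep_in[of X] blocks by auto
  qed
  ultimately have "ec_perm_graph ?Q (\<lambda>X Y. c (rep X) (rep Y))"
    by (rule ec_perm_graph_inj_pullback[OF G])
  moreover have "quot_col c = (\<lambda>X Y. c (rep X) (rep Y))" by (simp add: fun_eq_iff quot_col_rep)
  ultimately show ?thesis by simp
qed

lemma Union_quotient_module:
  assumes G: "complete_ec_graph V c" and M: "strong_module V c M" "2 \<le> card M"
    and C: "is_module (Pmax V c M) (quot_col c) C"
  shows "is_module V c (\<Union>C)"
  unfolding is_module_def
proof (intro conjI ballI)
  have V: "finite V" using complete_ec_graph_finite[OF G] .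
  note MV = strong_moduleD(3)[OF M(1)]
  note cover = Union_Pmax[OF V MV M(2)]
  note CP = is_module_subset[OF C]
  have UM: "\<Union>C \<subseteq> M" using CP cover by blast
  then show "\<Union>C \<subseteq> V" using MV by blast
  fix v u u' assume v: "v \<in> V - \<Union>C" and u: "u \<in> \<Union>C" and u': "u' \<in> \<Union>C"
  show "c u v = c u' v"
  proof (cases "v \<in> M")
    case False
    then show ?thesis using is_moduleD[OF strong_moduleD(1)[OF M(1)]] u u' v UM by blast
  next
    case True
    then obtain Z where Z: "Z \<in> Pmax V c M" "v \<in> Z" using cover by blast
    obtain X X' where X: "X \<in> C" "u \<in> X" and X': "X' \<in> C" "u' \<in> X'" using u u' by blast
    have "Z \<notin> C" using Z(2) v by blast
    then have ne: "X \<noteq> Z" "X' \<noteq> Z" using X(1) X'(1) by blast+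
    have XP: "X \<in> Pmax V c M" "X' \<in> Pmax V c M" using X(1) X'(1) CP by blast+
    have "c u v = quot_col c X Z" using quot_col_Pmax[OF G XP(1) Z(1) ne(1) X(2) Z(2)] by simp
    also have "\<dots> = quot_col c X' Z" using is_moduleD[OF C X(1) X'(1)] Z(1) \<open>Z \<notin> C\<close> by blast
    also have "\<dots> = c u' v" using quot_col_Pmax[OF G XP(2) Z(1) ne(2) X'(2) Z(2)] .
    finally show ?thesis .
  qed
qed

lemma quotient_module_of_module:
  assumes N: "is_module V c N" and children: "\<forall>X\<in>Pmax V c M. X \<subseteq> N \<or> X \<inter> N = {}"
  shows "is_module (Pmax V c M) (quot_col c) {X \<in> Pmax V c M. X \<subseteq> N}"
  unfolding is_module_def
proof (intro conjI ballI)
  fix Z X X' assume Z: "Z \<in> Pmax V c M - {X \<in> Pmax V c M. X \<subseteq> N}"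
    and X: "X \<in> {X \<in> Pmax V c M. X \<subseteq> N}" and X': "X' \<in> {X \<in> Pmax V c M. X \<subseteq> N}"
  have ZP: "Z \<in> Pmax V c M" "\<not> Z \<subseteq> N" and XP: "X \<in> Pmax V c M" "X \<subseteq> N"
    and X'P: "X' \<in> Pmax V c M" "X' \<subseteq> N" using Z X X' by simp_all
  note SZ = PmaxD(1)[OF ZP(1)] and SX = PmaxD(1)[OF XP(1)] and SX' = PmaxD(1)[OF X'P(1)]
  have "rep Z \<in> Z" "Z \<subseteq> V" using rep_in[OF strong_moduleD(2)[OF SZ]] strong_moduleD(3)[OF SZ] .
  moreover have "Z \<inter> N = {}" using children ZP by blast
  ultimately have out: "rep Z \<in> V - N" by blast
  have "rep X \<in> N" "rep X' \<in> N"
    using rep_in[OF strong_moduleD(2)[OF SX]] rep_in[OF strong_moduleD(2)[OF SX']] XP(2) X'P(2)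
    by blast+
  then have "c (rep X) (rep Z) = c (rep X') (rep Z)" using is_moduleD[OF N _ _ out] by blast
  then show "quot_col c X Z = quot_col c X' Z" unfolding quot_col_rep .
qed blast

lemma subset_Union_Pmax_children:
  assumes V: "finite V" and M: "M \<subseteq> V" "2 \<le> card M"
    and N: "N \<subseteq> M" "\<forall>X\<in>Pmax V c M. X \<subseteq> N \<or> X \<inter> N = {}"
  shows "N \<subseteq> \<Union>{X \<in> Pmax V c M. X \<subseteq> N}"
proof
  fix x assume x: "x \<in> N"
  then have "x \<in> \<Union>(Pmax V c M)" using N(1) unfolding Union_Pmax[OF V M] by blast
  then obtain X where X: "X \<in> Pmax V c M" "x \<in> X" by blast
  then have "X \<subseteq> N" using N(2) x by blast
  then show "x \<in> \<Union>{X \<in> Pmax V c M. X \<subseteq> N}" using X by blast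
qed

text \<open>N induces a module of the quotient, which is nested with the component C or
  disjoint from it.\<close>
lemma Union_color_component_nested_or_disjoint:
  assumes G: "complete_ec_graph V c" and M: "strong_module V c M" "2 \<le> card M"
    and C: "color_component (Pmax V c M) (quot_col c) j C"
    and N: "is_module V c N" "N \<subseteq> M" and children: "\<forall>X\<in>Pmax V c M. X \<subseteq> N \<or> X \<inter> N = {}"
  shows "\<Union>C \<subseteq> N \<or> N \<subseteq> \<Union>C \<or> \<Union>C \<inter> N = {}"
proof -
  let ?N = "{X \<in> Pmax V c M. X \<subseteq> N}"
  have V: "finite V" using complete_ec_graph_finite[OF G] .
  note MV = strong_moduleD(3)[OF M(1)]
  have GP: "complete_ec_graph (Pmax V c M) (quot_col c)" using complete_ec_graph_Pmax[OF G MV M(2)] .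
  have "C \<subseteq> ?N \<or> ?N \<subseteq> C \<or> C \<inter> ?N = {}"
    using color_component_module_nested_or_disjoint[OF GP C quotient_module_of_module[OF N(1) children]] .
  then consider "C \<subseteq> ?N" | "?N \<subseteq> C" | "C \<inter> ?N = {}" by blast
  then show ?thesis
  proof cases
    case 1
    then show ?thesis by blast
  next
    case 2
    then show ?thesis using subset_Union_Pmax_children[OF V MV M(2) N(2) children] by blast
  next
    case 3
    then have "\<Union>C \<inter> N = {}" using children color_componentD(2)[OF C] by blast
    then show ?thesis by blast
  qed
qed

text \<open>A module that cuts some child of M lies inside that child, which belongs to C or
  misses its union.\<close>
lemma Union_color_component_strong_module:
  assumes G: "complete_ec_graph V c" and M: "strong_module V c M" "2 \<le> card M"
    and rf: "rainbow_free (Pmax V c M) (quot_col c)"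
    and C: "color_component (Pmax V c M) (quot_col c) j C"
  shows "strong_module V c (\<Union>C)"
proof -
  let ?P = "Pmax V c M"
  have V: "finite V" using complete_ec_graph_finite[OF G] .
  note CP = color_componentD(2)[OF C]
  have UM: "\<Union>C \<subseteq> M" using CP Union_Pmax[OF V strong_moduleD(3)[OF M(1)] M(2)] by blast
  have "\<Union>C \<subseteq> N \<or> N \<subseteq> \<Union>C \<or> \<Union>C \<inter> N = {}" if N: "is_module V c N" for N
  proof (cases "\<forall>X\<in>?P. X \<subseteq> N \<or> X \<inter> N = {}")
    case True
    consider "M \<subseteq> N" | "M \<inter> N = {}" | "N \<subseteq> M"
      using strong_module_nested_or_disjoint[OF M(1) N] by blast
    then show ?thesis
    proof cases
      case 3
      show ?thesis using Union_color_component_nested_or_disjoint[OF G M C N 3 True] .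
    qed (use UM in blast)+
  next
    case False
    then obtain X where X: "X \<in> ?P" "\<not> X \<subseteq> N" "X \<inter> N \<noteq> {}" by blast
    then have "N \<subseteq> X" using strong_module_nested_or_disjoint[OF PmaxD(1)[OF X(1)] N] by blast
    moreover have "X \<in> C \<or> X \<inter> \<Union>C = {}" using Pmax_meets_Union[OF CP X(1)] by blast
    ultimately show ?thesis by blast
  qed
  moreover have "\<Union>C \<noteq> {}"
    using color_componentD(1)[OF C] CP strong_moduleD(2)[OF PmaxD(1)] by blast
  ultimately show ?thesis
    unfolding strong_module_def
    using Union_quotient_module[OF G M color_component_module[OF rf C]] by blast
qed

lemma card_colors_quotient_le_2:
  assumes G: "ec_perm_graph V c" and M: "strong_module V c M" "2 \<le> card M"
  shows "card (colors (Pmax V c M) (quot_col c)) \<le> 2"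
proof (rule ccontr)
  let ?P = "Pmax V c M"
  assume "\<not> ?thesis"
  then have three: "3 \<le> card (colors ?P (quot_col c))" by simp
  have GV: "complete_ec_graph V c" using ec_perm_graph_complete[OF G] .
  have V: "finite V" using complete_ec_graph_finite[OF GV] .
  note MV = strong_moduleD(3)[OF M(1)]
  have GP: "complete_ec_graph ?P (quot_col c)" using complete_ec_graph_Pmax[OF GV MV M(2)] .
  have rf: "rainbow_free ?P (quot_col c)"
    using ec_perm_graph_rainbow_free[OF ec_perm_graph_quotient[OF G M(1)]] M(2)
    unfolding quot_vertices_def by simp
  obtain j S where j: "j \<in> colors ?P (quot_col c)"
    and S: "S \<noteq> {}" "S \<subset> ?P" "color_closed ?P (quot_col c) j S"
    using gallai_disconnected_color[OF GP rf three] by blast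
  then obtain X Y where XY: "X \<in> ?P" "Y \<in> ?P" "X \<noteq> Y" "quot_col c X Y = j"
    unfolding colors_def by blast
  obtain C where C: "color_component ?P (quot_col c) j C" "X \<in> C"
    using color_component_exists[OF GP XY(1)] by blast
  have "Y \<in> C" using color_componentD(3)[OF C(1)] C(2) XY(2,4) unfolding color_closed_def by blast
  have "C \<noteq> ?P" using color_component_ne_if_disconnected[OF GP C(1) S] .
  then have "\<Union>C \<subset> M" using Union_psubset_Pmax[OF V MV M(2) color_componentD(2)[OF C(1)]] by blast
  moreover have "X \<subseteq> \<Union>C" using C(2) by blast
  moreover have "strong_module V c (\<Union>C)"
    using Union_color_component_strong_module[OF GV M rf C(1)] .
  ultimately have "\<Union>C = X" using Pmax_maximal[OF XY(1)] by blast
  moreover have "Y \<noteq> {}" using strong_moduleD(2)[OF PmaxD(1)[OF XY(2)]] .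
  ultimately show False using Pmax_disjoint[OF XY(1,2,3)] \<open>Y \<in> C\<close> by blast
qed

lemma prime_module_quotient_two_colors:
  assumes G: "ec_perm_graph V c" and M: "prime_module V c M" "2 \<le> card M"
  shows "card (colors (Pmax V c M) (quot_col c)) = 2"
proof -
  let ?P = "Pmax V c M" and ?colors = "colors (Pmax V c M) (quot_col c)"
  have V: "finite V" using complete_ec_graph_finite[OF ec_perm_graph_complete[OF G]] .
  have strong: "strong_module V c M" and not_series: "\<not> series_module V c M"
    using M(1) unfolding prime_module_def by simp_all
  have P2: "2 \<le> card ?P" using two_le_card_Pmax[OF V strong_moduleD(3)[OF strong] M(2)] .
  have "finite ?colors"
  proof -
    have "?colors \<subseteq> (\<lambda>(X, Y). quot_col c X Y) ` (?P \<times> ?P)" unfolding colors_def by auto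
    then show ?thesis using finite_Pmax[OF V, of c M] finite_subset by blast
  qed
  moreover have "?colors \<noteq> {}"
  proof -
    have "\<not> (\<forall>X\<in>?P. \<forall>Y\<in>?P. X = Y)"
      using P2 card_le_Suc0_iff_eq[OF finite_Pmax[OF V, of c M]] by auto
    then obtain X Y where "X \<in> ?P" "Y \<in> ?P" "X \<noteq> Y" by auto
    then show ?thesis unfolding colors_def by blast
  qed
  ultimately have "card ?colors \<noteq> 0" by simp
  moreover have "card ?colors \<noteq> 1"
    using not_series strong P2 M(2) unfolding series_module_def quot_vertices_def by simp
  moreover have "card ?colors \<le> 2" using card_colors_quotient_le_2[OF G strong M(2)] .
  ultimately show ?thesis by presburger
qed

theorem corollary4p11:
  fixes V :: "'a set" and c :: "'a \<Rightarrow> 'a \<Rightarrow> 'c"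
  assumes "ec_perm_graph V c"
  shows "\<forall>M. prime_module V c M \<longrightarrow>
           ec_perm_graph (quot_vertices V c M) (quot_col c) \<and>
           (card M \<ge> 3 \<longrightarrow> card (colors (quot_vertices V c M) (quot_col c)) = 2)"
proof (intro allI impI conjI)
  fix M assume M: "prime_module V c M"
  then show "ec_perm_graph (quot_vertices V c M) (quot_col c)"
    using ec_perm_graph_quotient[OF assms] unfolding prime_module_def by blast
  assume "card M \<ge> 3"
  then show "card (colors (quot_vertices V c M) (quot_col c)) = 2"
    using prime_module_quotient_two_colors[OF assms M] unfolding quot_vertices_def by simp
qed

end
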